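(* Let $Z=\{z_n\}_{n\in\mathbb{N}}$, $W=\{w_m\}_{m\in\mathbb{N}}$ be almost periodic divisors in a strip $S$. Then for any $\varepsilon>0$ and any substrip $S^0\subset S$ with $\operatorname{dist}(S^0,\partial S)>\varepsilon$, there is a relatively dense set $E\subset\mathbb{R}$ such that for every $\tau\in E$ there are bijections $\sigma_Z,\sigma_W:\mathbb{N}\to\mathbb{N}$ such that for all $z_j\in|Z|\cap S^0$ and all $w_r\in|W|\cap S^0$: $$|z_j+i\tau-z_{\sigma_Z(j)}|<\varepsilon,\quad |w_r+i\tau-w_{\sigma_W(r)}|<\varepsilon,$$ $$|z_j-i\tau-z_{\sigma_Z^{-1}(j)}|<\varepsilon,\quad |w_r-i\tau-w_{\sigma_W^{-1}(r)}|<\varepsilon.$$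
   Context: A (vertical) strip is a set $\{z\in\mathbb{C}: a<\operatorname{Re} z<b\}$ with $-\infty\le a<b\le\infty$; a substrip of $S$ is a strip of this form contained in $S$. A divisor in $S$ is a sequence $\{z_j\}\subset S$ without limit points in $S$ (points may repeat finitely often, encoding multiplicity); $|Z|$ denotes its set of points. A set $E\subset\mathbb{R}$ is relatively dense if there is $L<\infty$ with $E\cap[\alpha,\alpha+L]\ne\emptyset$ for every $\alpha\in\mathbb{R}$. A divisor $Z=\{z_j\}$ in $S$ is almost periodic if for every $\varepsilon>0$ and every substrip $S^0$ with $\overline{S^0}\subset S$, the set of all $\tau\in\mathbb{R}$ for which there exists a bijection $\sigma:\mathbb{N}\to\mathbb{N}$ such that for every $j$, ($z_j\in S^0$ or $z_{\sigma(j)}\in S^0$) implies $|z_j+i\tau-z_{\sigma(j)}|<\varepsilon$, is relatively dense. *)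

theory Defs
  imports "HOL-Analysis.Analysis" "HOL-Library.Extended_Real"
begin

definition strip :: "ereal \<Rightarrow> ereal \<Rightarrow> complex set" where
  "strip a b = {z. a < ereal (Re z) \<and> ereal (Re z) < b}"

text \<open>A divisor in S: a sequence of points of S without limit points in S
  (each point of S has a neighbourhood containing only finitely many terms,
  so points repeat only finitely often).\<close>
definition divisor_in :: "(nat \<Rightarrow> complex) \<Rightarrow> complex set \<Rightarrow> bool" where
  "divisor_in z S \<longleftrightarrow> (\<forall>j. z j \<in> S) \<and>
     (\<forall>w\<in>S. \<exists>r>0. finite {j. z j \<in> ball w r})"

definition rel_dense :: "real set \<Rightarrow> bool" where
  "rel_dense E \<longleftrightarrow> (\<exists>L. \<forall>\<alpha>. E \<inter> {\<alpha>..\<alpha>+L} \<noteq> {})"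

definition almost_periodic_divisor :: "(nat \<Rightarrow> complex) \<Rightarrow> ereal \<Rightarrow> ereal \<Rightarrow> bool" where
  "almost_periodic_divisor z a b \<longleftrightarrow> divisor_in z (strip a b) \<and>
     (\<forall>\<epsilon>>0. \<forall>a0 b0. a0 < b0 \<and> strip a0 b0 \<subseteq> strip a b \<and>
        closure (strip a0 b0) \<subseteq> strip a b \<longrightarrow>
        rel_dense {\<tau>. \<exists>\<sigma>. bij \<sigma> \<and>
          (\<forall>j. (z j \<in> strip a0 b0 \<or> z (\<sigma> j) \<in> strip a0 b0) \<longrightarrow>
               cmod (z j + \<i> * complex_of_real \<tau> - z (\<sigma> j)) < \<epsilon>)})"

end

theory Submission
  imports Defs
begin

text \<open>Take \<open>e = \<epsilon>/6\<close>. Since \<open>S\<^sup>0\<close> stays more than \<open>\<epsilon>\<close> away from the boundary, the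
  \<open>e\<close>-almost periods of \<open>Z\<close> and of \<open>W\<close> on the strip widened by \<open>5e\<close> form relatively dense
  sets \<open>P\<close> and \<open>Q\<close>. Choose \<open>p\<^sub>n \<in> P\<close>, \<open>q\<^sub>n \<in> Q\<close> in the window \<open>[nL, nL + L]\<close>; the differences
  \<open>p\<^sub>n - q\<^sub>n\<close> lie in \<open>[-L, L]\<close>, so they fall into finitely many classes of width \<open>e\<close>, each
  with a fixed representative \<open>m\<close>. Then \<open>\<tau> = p\<^sub>n - p\<^sub>m\<close> is a \<open>2e\<close>-almost period of \<open>Z\<close>, and it
  differs by less than \<open>e\<close> from the \<open>2e\<close>-almost period \<open>q\<^sub>n - q\<^sub>m\<close> of \<open>W\<close>. As the representatives
  are bounded, these \<open>\<tau>\<close> form a relatively dense set. Composing the bijections costs some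
  width of the strip, which the margin \<open>5e\<close> pays for; the estimates for \<open>\<sigma>\<^sup>-\<^sup>1\<close> are those
  for \<open>\<sigma>\<close> read backwards.\<close>

definition almost_period :: "(nat \<Rightarrow> complex) \<Rightarrow> complex set \<Rightarrow> real \<Rightarrow> real \<Rightarrow> bool" where
  "almost_period z A e \<tau> \<longleftrightarrow> (\<exists>\<sigma>. bij \<sigma> \<and> (\<forall>j. (z j \<in> A \<or> z (\<sigma> j) \<in> A) \<longrightarrow>
      cmod (z j + \<i> * complex_of_real \<tau> - z (\<sigma> j)) < e))"

lemma abs_Re_diff_le_cmod_shift: "\<bar>Re y - Re x\<bar> \<le> cmod (x + \<i> * complex_of_real t - y)"
  using abs_Re_le_cmod[of "x + \<i> * complex_of_real t - y"] by simp

lemma almost_period_inv_bound: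
  assumes "bij \<sigma>"
    and "\<And>j. z j \<in> A \<or> z (\<sigma> j) \<in> A \<Longrightarrow> cmod (z j + \<i> * complex_of_real t - z (\<sigma> j)) < e"
    and "z j \<in> A \<or> z (inv \<sigma> j) \<in> A"
  shows "cmod (z j - \<i> * complex_of_real t - z (inv \<sigma> j)) < e"
proof -
  have "\<sigma> (inv \<sigma> j) = j" using assms(1) by (simp add: bij_is_surj surj_f_inv_f)
  then have "cmod (z (inv \<sigma> j) + \<i> * complex_of_real t - z j) < e"
    using assms(2)[of "inv \<sigma> j"] assms(3) by auto
  moreover have "z j - \<i> * complex_of_real t - z (inv \<sigma> j) =
      - (z (inv \<sigma> j) + \<i> * complex_of_real t - z j)"
    by (simp add: algebra_simps)
  ultimately show ?thesis by (metis norm_minus_cancel)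
qed

lemma almost_period_uminus:
  assumes "almost_period z A e t"
  shows "almost_period z A e (- t)"
proof -
  obtain \<sigma> where \<sigma>: "bij \<sigma>" "\<And>j. z j \<in> A \<or> z (\<sigma> j) \<in> A \<Longrightarrow>
      cmod (z j + \<i> * complex_of_real t - z (\<sigma> j)) < e"
    using assms unfolding almost_period_def by blast
  have "bij (inv \<sigma>)" using \<sigma>(1) by (rule bij_imp_bij_inv)
  with almost_period_inv_bound[of \<sigma> z A t e, OF \<sigma>] show ?thesis
    unfolding almost_period_def by (intro exI[of _ "inv \<sigma>"]) auto
qed

lemma almost_period_imp_bij_bounds:
  assumes "almost_period z A e t"
  shows "\<exists>\<sigma>. bij \<sigma> \<and> (\<forall>j. z j \<in> A \<longrightarrow>
           cmod (z j + \<i> * complex_of_real t - z (\<sigma> j)) < e \<and>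
           cmod (z j - \<i> * complex_of_real t - z (inv \<sigma> j)) < e)"
proof -
  obtain \<sigma> where \<sigma>: "bij \<sigma>" "\<And>j. z j \<in> A \<or> z (\<sigma> j) \<in> A \<Longrightarrow>
      cmod (z j + \<i> * complex_of_real t - z (\<sigma> j)) < e"
    using assms unfolding almost_period_def by blast
  then show ?thesis using almost_period_inv_bound[of \<sigma> z A t e, OF \<sigma>] by blast
qed

lemma almost_period_small: "\<bar>t\<bar> < e \<Longrightarrow> almost_period z A e t"
  unfolding almost_period_def by (rule exI[of _ id]) (simp add: norm_mult)

lemma almost_period_mono:
  "almost_period z A e t \<Longrightarrow> B \<subseteq> A \<Longrightarrow> e \<le> e' \<Longrightarrow> almost_period z B e' t"
  unfolding almost_period_def by (meson less_le_trans subsetD)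

text \<open>Composing the two bijections needs the intermediate point \<open>z (\<sigma>\<^sub>1 j)\<close> to lie in \<open>A\<close>;
  since it is close to either \<open>z j\<close> or \<open>z (\<sigma>\<^sub>2 (\<sigma>\<^sub>1 j))\<close>, this is what \<open>A\<close> being a
  neighbourhood of \<open>B\<close> provides.\<close>

lemma almost_period_add:
  assumes t1: "almost_period z A e1 t1" and t2: "almost_period z A e2 t2"
    and "e1 > 0" "e2 > 0"
    and nbhd: "\<And>x y. x \<in> B \<Longrightarrow> \<bar>Re y - Re x\<bar> < e1 + e2 \<Longrightarrow> y \<in> A"
  shows "almost_period z B (e1 + e2) (t1 + t2)"
proof -
  obtain \<sigma>1 where \<sigma>1: "bij \<sigma>1" "\<And>j. z j \<in> A \<or> z (\<sigma>1 j) \<in> A \<Longrightarrow>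
      cmod (z j + \<i> * complex_of_real t1 - z (\<sigma>1 j)) < e1"
    using t1 unfolding almost_period_def by blast
  obtain \<sigma>2 where \<sigma>2: "bij \<sigma>2" "\<And>j. z j \<in> A \<or> z (\<sigma>2 j) \<in> A \<Longrightarrow>
      cmod (z j + \<i> * complex_of_real t2 - z (\<sigma>2 j)) < e2"
    using t2 unfolding almost_period_def by blast
  have nbhd': "y \<in> A" if "x \<in> B" "cmod (x + \<i> * complex_of_real t - y) < e \<or>
      cmod (y + \<i> * complex_of_real t - x) < e" "e \<le> e1 + e2" for x y t e
    using that nbhd[OF that(1), of y] abs_Re_diff_le_cmod_shift[of y x t]
      abs_Re_diff_le_cmod_shift[of x y t] by (auto simp: abs_minus_commute)
  have "cmod (z j + \<i> * complex_of_real (t1 + t2) - z (\<sigma>2 (\<sigma>1 j))) < e1 + e2"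
    if j: "z j \<in> B \<or> z (\<sigma>2 (\<sigma>1 j)) \<in> B" for j
  proof -
    have "z (\<sigma>1 j) \<in> A"
    proof (cases "z j \<in> B")
      case True
      then have "z j \<in> A" using nbhd[OF True, of "z j"] assms(3,4) by simp
      then show ?thesis using nbhd'[OF True] \<sigma>1(2) assms(4) by fastforce
    next
      case False
      then have B: "z (\<sigma>2 (\<sigma>1 j)) \<in> B" using j by simp
      then have "z (\<sigma>2 (\<sigma>1 j)) \<in> A" using nbhd[OF B, of "z (\<sigma>2 (\<sigma>1 j))"] assms(3,4) by simp
      then show ?thesis using nbhd'[OF B] \<sigma>2(2) assms(3) by fastforce
    qed
    then have "cmod (z j + \<i> * complex_of_real t1 - z (\<sigma>1 j)) < e1"
      and "cmod (z (\<sigma>1 j) + \<i> * complex_of_real t2 - z (\<sigma>2 (\<sigma>1 j))) < e2"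
      using \<sigma>1(2) \<sigma>2(2) by blast+
    moreover have "z j + \<i> * complex_of_real (t1 + t2) - z (\<sigma>2 (\<sigma>1 j)) =
        (z j + \<i> * complex_of_real t1 - z (\<sigma>1 j)) +
        (z (\<sigma>1 j) + \<i> * complex_of_real t2 - z (\<sigma>2 (\<sigma>1 j)))"
      by (simp add: algebra_simps)
    ultimately show ?thesis by (smt (verit) norm_triangle_ineq)
  qed
  moreover have "bij (\<sigma>2 \<circ> \<sigma>1)" using \<sigma>1(1) \<sigma>2(1) by (rule bij_comp)
  ultimately show ?thesis unfolding almost_period_def by (intro exI[of _ "\<sigma>2 \<circ> \<sigma>1"]) auto
qed

lemma almost_period_diff:
  assumes "almost_period z A e p" "almost_period z A e p'" "e > 0"
    and "\<And>x y. x \<in> B \<Longrightarrow> \<bar>Re y - Re x\<bar> < 2 * e \<Longrightarrow> y \<in> A"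
  shows "almost_period z B (2 * e) (p - p')"
proof -
  from assms(4) have "\<And>x y. x \<in> B \<Longrightarrow> \<bar>Re y - Re x\<bar> < e + e \<Longrightarrow> y \<in> A"
    unfolding mult_2 .
  from almost_period_add[OF assms(1) almost_period_uminus[OF assms(2)] assms(3,3) this]
  show ?thesis by (simp only: mult_2 diff_conv_add_uminus)
qed

lemma strip_widen:
  assumes "x \<in> strip (c - ereal t) (d + ereal t)" "\<bar>Re y - Re x\<bar> < s" "t + s \<le> t'"
  shows "y \<in> strip (c - ereal t') (d + ereal t')"
  using assms unfolding strip_def by (cases c; cases d) auto

lemma almost_period_diff_widened_strip:
  assumes "almost_period z (strip (c - ereal t') (d + ereal t')) e p"
    and "almost_period z (strip (c - ereal t') (d + ereal t')) e p'"
    and "e > 0" "t + 2 * e \<le> t'"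
  shows "almost_period z (strip (c - ereal t) (d + ereal t)) (2 * e) (p - p')"
  by (rule almost_period_diff[OF assms(1-3)], rule strip_widen[where s = "2 * e"])
    (use assms(4) in auto)

lemma almost_period_perturb_widened_strip:
  assumes "almost_period z (strip (c - ereal t') (d + ereal t')) e p"
    and "\<bar>\<tau> - p\<bar> < e'" "e > 0" "e' > 0" "t + e + e' \<le> t'"
  shows "almost_period z (strip (c - ereal t) (d + ereal t)) (e + e') \<tau>"
proof -
  have "almost_period z (strip (c - ereal t) (d + ereal t)) (e + e') (p + (\<tau> - p))"
    by (rule almost_period_add[OF assms(1) almost_period_small[OF assms(2)] assms(3,4)],
        rule strip_widen[where s = "e + e'"]) (use assms(5) in auto)
  then show ?thesis by simp
qed

lemma Complex_lower_in_frontier_strip: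
  assumes "a < b" "a = ereal r"
  shows "Complex r s \<in> frontier (strip a b)"
proof -
  have "Complex r s \<in> closure (strip a b)"
    unfolding closure_approachable
  proof (intro allI impI)
    fix e :: real assume "e > 0"
    then have "a < min b (ereal (r + e))" using assms by auto
    then obtain y where y: "a < ereal y" "ereal y < min b (ereal (r + e))"
      using ereal_dense2 by blast
    then have "Complex y s \<in> strip a b" unfolding strip_def by auto
    moreover have "dist (Complex y s) (Complex r s) < e"
      using y assms by (simp add: dist_complex_def complex_diff flip: complex_of_real_def of_real_diff)
    ultimately show "\<exists>x\<in>strip a b. dist x (Complex r s) < e" by blast
  qed
  moreover have "Complex r s \<notin> interior (strip a b)"
    using interior_subset[of "strip a b"] assms unfolding strip_def by auto
  ultimately show ?thesis unfolding frontier_def by blast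
qed

lemma Complex_upper_in_frontier_strip:
  assumes "a < b" "b = ereal r"
  shows "Complex r s \<in> frontier (strip a b)"
proof -
  have "Complex r s \<in> closure (strip a b)"
    unfolding closure_approachable
  proof (intro allI impI)
    fix e :: real assume "e > 0"
    then have "max a (ereal (r - e)) < b" using assms by auto
    then obtain y where y: "max a (ereal (r - e)) < ereal y" "ereal y < b"
      using ereal_dense2 by blast
    then have "Complex y s \<in> strip a b" unfolding strip_def by auto
    moreover have "dist (Complex y s) (Complex r s) < e"
      using y assms by (simp add: dist_complex_def complex_diff flip: complex_of_real_def of_real_diff)
    ultimately show "\<exists>x\<in>strip a b. dist x (Complex r s) < e" by blast
  qed
  moreover have "Complex r s \<notin> interior (strip a b)"
    using interior_subset[of "strip a b"] assms unfolding strip_def by auto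
  ultimately show ?thesis unfolding frontier_def by blast
qed

lemma strip_lower_bound:
  assumes "a0 < b0" "\<And>x. x \<in> strip a0 b0 \<Longrightarrow> c \<le> Re x"
  shows "ereal c \<le> a0"
proof (rule ccontr)
  assume "\<not> ereal c \<le> a0"
  then have "a0 < min b0 (ereal c)" using assms(1) by auto
  then obtain y where "a0 < ereal y" "ereal y < min b0 (ereal c)" using ereal_dense2 by blast
  then show False using assms(2)[of "complex_of_real y"] unfolding strip_def by auto
qed

lemma strip_upper_bound:
  assumes "a0 < b0" "\<And>x. x \<in> strip a0 b0 \<Longrightarrow> Re x \<le> c"
  shows "b0 \<le> ereal c"
proof (rule ccontr)
  assume "\<not> b0 \<le> ereal c"
  then have "max a0 (ereal c) < b0" using assms(1) by auto
  then obtain y where "max a0 (ereal c) < ereal y" "ereal y < b0" using ereal_dense2 by blast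
  then show False using assms(2)[of "complex_of_real y"] unfolding strip_def by auto
qed

lemma dist_Complex_same_Im: "dist x (Complex r (Im x)) = \<bar>Re x - r\<bar>"
  by (simp add: dist_norm cmod_def)

lemma strip_lower_margin:
  assumes "a < b" "a = ereal r" "a0 < b0" "strip a0 b0 \<subseteq> strip a b"
    and "\<epsilon> < setdist (strip a0 b0) (frontier (strip a b))"
  shows "ereal (r + \<epsilon>) \<le> a0"
proof (rule strip_lower_bound[OF assms(3)])
  fix x assume x: "x \<in> strip a0 b0"
  then have "r < Re x" using assms(2,4) unfolding strip_def by auto
  have "\<epsilon> < dist x (Complex r (Im x))"
    using setdist_le_dist[OF x Complex_lower_in_frontier_strip[OF assms(1,2), of "Im x"]] assms(5) by simp
  then show "r + \<epsilon> \<le> Re x" using \<open>r < Re x\<close> by (simp add: dist_Complex_same_Im)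
qed

lemma strip_upper_margin:
  assumes "a < b" "b = ereal r" "a0 < b0" "strip a0 b0 \<subseteq> strip a b"
    and "\<epsilon> < setdist (strip a0 b0) (frontier (strip a b))"
  shows "b0 \<le> ereal (r - \<epsilon>)"
proof (rule strip_upper_bound[OF assms(3)])
  fix x assume x: "x \<in> strip a0 b0"
  then have "Re x < r" using assms(2,4) unfolding strip_def by auto
  have "\<epsilon> < dist x (Complex r (Im x))"
    using setdist_le_dist[OF x Complex_upper_in_frontier_strip[OF assms(1,2), of "Im x"]] assms(5) by simp
  then show "Re x \<le> r - \<epsilon>" using \<open>Re x < r\<close> by (simp add: dist_Complex_same_Im)
qed

lemma closure_strip_subset:
  "closure (strip c d) \<subseteq> {x. c \<le> ereal (Re x) \<and> ereal (Re x) \<le> d}"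
proof (rule closure_minimal)
  show "closed {x. c \<le> ereal (Re x) \<and> ereal (Re x) \<le> d}"
    by (intro closed_Collect_conj closed_Collect_le continuous_intros)
qed (auto simp: strip_def)

lemma closure_widened_strip_subset:
  assumes "a < b" "a0 < b0" "strip a0 b0 \<subseteq> strip a b"
    and margin: "frontier (strip a b) = {} \<or> \<epsilon> < setdist (strip a0 b0) (frontier (strip a b))"
    and "t < \<epsilon>"
  shows "closure (strip (a0 - ereal t) (b0 + ereal t)) \<subseteq> strip a b"
proof -
  have "a < ereal x" if "a0 - ereal t \<le> ereal x" for x
  proof (cases a)
    case (real r)
    then have "ereal (r + \<epsilon>) \<le> a0"
      using strip_lower_margin[OF assms(1) real assms(2,3)] margin
        Complex_lower_in_frontier_strip[OF assms(1) real] by blast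
    then show ?thesis using real that assms(5) by (cases a0) auto
  qed (use assms(1) in auto)
  moreover have "ereal x < b" if "ereal x \<le> b0 + ereal t" for x
  proof (cases b)
    case (real r)
    then have "b0 \<le> ereal (r - \<epsilon>)"
      using strip_upper_margin[OF assms(1) real assms(2,3)] margin
        Complex_upper_in_frontier_strip[OF assms(1) real] by blast
    then show ?thesis using real that assms(5) by (cases b0) auto
  qed (use assms(1) in auto)
  ultimately show ?thesis
    using closure_strip_subset[of "a0 - ereal t" "b0 + ereal t"] unfolding strip_def by blast
qed

lemma almost_periodic_divisor_rel_dense_widened:
  assumes "almost_periodic_divisor z a b" "e > 0"
    and "a < b" "a0 < b0" "strip a0 b0 \<subseteq> strip a b"
    and "frontier (strip a b) = {} \<or> \<epsilon> < setdist (strip a0 b0) (frontier (strip a b))"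
    and "0 \<le> t" "t < \<epsilon>"
  shows "rel_dense {\<tau>. almost_period z (strip (a0 - ereal t) (b0 + ereal t)) e \<tau>}"
proof -
  have "closure (strip (a0 - ereal t) (b0 + ereal t)) \<subseteq> strip a b"
    using closure_widened_strip_subset[OF assms(3-6,8)] .
  moreover have "a0 - ereal t < b0 + ereal t"
    using assms(4,7) by (cases a0; cases b0) auto
  ultimately show ?thesis
    using assms(1,2) closure_subset unfolding almost_periodic_divisor_def almost_period_def
    by (meson order_trans)
qed

lemma rel_dense_common_window:
  assumes "rel_dense P" "rel_dense Q"
  obtains L :: real where "L > 0"
    "\<And>n::int. \<exists>p\<in>P. of_int n * L \<le> p \<and> p \<le> of_int n * L + L"
    "\<And>n::int. \<exists>q\<in>Q. of_int n * L \<le> q \<and> q \<le> of_int n * L + L"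
proof -
  obtain LP LQ where "\<And>\<alpha>. P \<inter> {\<alpha>..\<alpha> + LP} \<noteq> {}" "\<And>\<alpha>. Q \<inter> {\<alpha>..\<alpha> + LQ} \<noteq> {}"
    using assms unfolding rel_dense_def by blast
  then have "\<And>\<alpha>. P \<inter> {\<alpha>..\<alpha> + max 1 (max LP LQ)} \<noteq> {}"
    and "\<And>\<alpha>. Q \<inter> {\<alpha>..\<alpha> + max 1 (max LP LQ)} \<noteq> {}"
    by (fastforce simp: ex_in_conv[symmetric])+
  then show ?thesis by (intro that[of "max 1 (max LP LQ)"]) fastforce+
qed

lemma abs_diff_less_if_floor_div_eq:
  fixes x y e :: real
  assumes "e > 0" "\<lfloor>x / e\<rfloor> = \<lfloor>y / e\<rfloor>"
  shows "\<bar>x - y\<bar> < e"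
proof -
  have "\<bar>x / e - y / e\<bar> < 1"
    using assms(2) floor_correct[of "x / e"] floor_correct[of "y / e"] by linarith
  then show ?thesis using assms(1) by (simp add: diff_divide_distrib[symmetric] abs_divide)
qed

lemma window_diff_bounds:
  fixes L x y \<alpha> :: real and M n m :: int
  assumes "L > 0" "n = M + 1 + \<lceil>\<alpha> / L\<rceil>" "\<bar>m\<bar> \<le> M"
    and "of_int n * L \<le> x" "x \<le> of_int n * L + L"
    and "of_int m * L \<le> y" "y \<le> of_int m * L + L"
  shows "\<alpha> \<le> x - y \<and> x - y \<le> \<alpha> + (2 * of_int M + 3) * L"
proof -
  define k where "k = real_of_int \<lceil>\<alpha> / L\<rceil>"
  have "\<alpha> / L \<le> k" "k < \<alpha> / L + 1" unfolding k_def using ceiling_correct[of "\<alpha> / L"] by auto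
  then have "\<alpha> \<le> k * L" "k * L < \<alpha> + L" using assms(1) by (auto simp: field_simps)
  moreover have "k * L \<le> (of_int n - of_int m - 1) * L"
    and "(of_int n - of_int m + 1) * L \<le> (2 * of_int M + 2 + k) * L"
    using assms(1-3) unfolding k_def by (auto intro!: mult_right_mono)
  ultimately show ?thesis using assms(4-7) by (auto simp: algebra_simps)
qed

lemma rel_dense_common_differences:
  fixes P Q :: "real set" and e :: real
  assumes "rel_dense P" "rel_dense Q" "e > 0"
  shows "\<exists>E. rel_dense E \<and>
    (\<forall>\<tau>\<in>E. \<exists>p\<in>P. \<exists>p'\<in>P. \<exists>q\<in>Q. \<exists>q'\<in>Q. \<tau> = p - p' \<and> \<bar>\<tau> - (q - q')\<bar> < e)"
proof -
  obtain L where L: "L > 0"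
    "\<And>n::int. \<exists>p\<in>P. of_int n * L \<le> p \<and> p \<le> of_int n * L + L"
    "\<And>n::int. \<exists>q\<in>Q. of_int n * L \<le> q \<and> q \<le> of_int n * L + L"
    using rel_dense_common_window[OF assms(1,2)] by blast
  obtain p :: "int \<Rightarrow> real" where
    p: "\<And>n. p n \<in> P \<and> of_int n * L \<le> p n \<and> p n \<le> of_int n * L + L"
    using L(2) by metis
  obtain q :: "int \<Rightarrow> real" where
    q: "\<And>n. q n \<in> Q \<and> of_int n * L \<le> q n \<and> q n \<le> of_int n * L + L"
    using L(3) by metis
  define c where "c n = \<lfloor>(p n - q n) / e\<rfloor>" for n
  define rep where "rep = inv c"
  have "range c \<subseteq> {\<lfloor>- L / e\<rfloor>..\<lfloor>L / e\<rfloor>}"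
  proof
    fix v assume "v \<in> range c"
    then obtain n where "v = c n" by blast
    moreover have "- L \<le> p n - q n" "p n - q n \<le> L" using p[of n] q[of n] by auto
    then have "- L / e \<le> (p n - q n) / e" "(p n - q n) / e \<le> L / e"
      using assms(3) divide_right_mono by (metis less_imp_le)+
    ultimately show "v \<in> {\<lfloor>- L / e\<rfloor>..\<lfloor>L / e\<rfloor>}"
      unfolding c_def by (auto intro!: floor_mono)
  qed
  then have "finite (range c)" by (rule finite_subset) simp
  define M where "M = Max ((\<lambda>v. \<bar>rep v\<bar>) ` range c)"
  have M: "\<bar>rep (c n)\<bar> \<le> M" for n
    unfolding M_def using \<open>finite (range c)\<close> by (intro Max_ge) auto
  define E where "E = range (\<lambda>n. p n - p (rep (c n)))"
  have "rel_dense E" unfolding rel_dense_def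
  proof (intro exI allI)
    fix \<alpha>
    define n where "n = M + 1 + \<lceil>\<alpha> / L\<rceil>"
    have "p n - p (rep (c n)) \<in> E \<inter> {\<alpha>..\<alpha> + (2 * of_int M + 3) * L}"
      using window_diff_bounds[OF L(1) n_def M] p[of n] p[of "rep (c n)"] unfolding E_def by auto
    then show "E \<inter> {\<alpha>..\<alpha> + (2 * of_int M + 3) * L} \<noteq> {}" by blast
  qed
  moreover have "\<exists>p'\<in>P. \<exists>p''\<in>P. \<exists>q'\<in>Q. \<exists>q''\<in>Q. \<tau> = p' - p'' \<and> \<bar>\<tau> - (q' - q'')\<bar> < e"
    if "\<tau> \<in> E" for \<tau>
  proof -
    obtain n where \<tau>: "\<tau> = p n - p (rep (c n))" using \<open>\<tau> \<in> E\<close> unfolding E_def by blast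
    have "c (rep (c n)) = c n" unfolding rep_def by (simp add: f_inv_into_f)
    then have "\<bar>(p n - q n) - (p (rep (c n)) - q (rep (c n)))\<bar> < e"
      using abs_diff_less_if_floor_div_eq[OF assms(3)] unfolding c_def by metis
    then show ?thesis
      using p[of n] p[of "rep (c n)"] q[of n] q[of "rep (c n)"] unfolding \<tau>
      by (intro bexI[of _ "p n"] bexI[of _ "p (rep (c n))"] bexI[of _ "q n"] bexI[of _ "q (rep (c n))"])
        (auto simp: algebra_simps)
  qed
  ultimately show ?thesis by blast
qed

theorem lemma2:
  fixes z w :: "nat \<Rightarrow> complex" and a b a0 b0 :: ereal and \<epsilon> :: real
  assumes "a < b"
    and "almost_periodic_divisor z a b"
    and "almost_periodic_divisor w a b"
    and "\<epsilon> > 0"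
    and "a0 < b0"
    and "strip a0 b0 \<subseteq> strip a b"
    and "frontier (strip a b) = {} \<or> setdist (strip a0 b0) (frontier (strip a b)) > \<epsilon>"
  shows "\<exists>E. rel_dense E \<and>
    (\<forall>\<tau>\<in>E. \<exists>\<sigma>Z \<sigma>W. bij \<sigma>Z \<and> bij \<sigma>W \<and>
       (\<forall>j. z j \<in> strip a0 b0 \<longrightarrow>
           cmod (z j + \<i> * complex_of_real \<tau> - z (\<sigma>Z j)) < \<epsilon> \<and>
           cmod (z j - \<i> * complex_of_real \<tau> - z (inv \<sigma>Z j)) < \<epsilon>) \<and>
       (\<forall>r. w r \<in> strip a0 b0 \<longrightarrow>
           cmod (w r + \<i> * complex_of_real \<tau> - w (\<sigma>W r)) < \<epsilon> \<and>
           cmod (w r - \<i> * complex_of_real \<tau> - w (inv \<sigma>W r)) < \<epsilon>))"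
proof -
  define e where "e = \<epsilon> / 6"
  define T where "T t = strip (a0 - ereal t) (b0 + ereal t)" for t
  have e: "e > 0" using assms(4) unfolding e_def by simp
  have T0: "T 0 = strip a0 b0" unfolding T_def by (simp flip: zero_ereal_def)
  have "rel_dense {\<tau>. almost_period z (T (5 * e)) e \<tau>}" "rel_dense {\<tau>. almost_period w (T (5 * e)) e \<tau>}"
    unfolding T_def using e assms(4) e_def
    by (intro almost_periodic_divisor_rel_dense_widened[OF _ _ assms(1,5,6,7)] assms(2,3); simp)+
  from rel_dense_common_differences[OF this e] obtain E where "rel_dense E" and E:
    "\<And>\<tau>. \<tau> \<in> E \<Longrightarrow> \<exists>p p' q q'. almost_period z (T (5 * e)) e p \<and> almost_period z (T (5 * e)) e p'
       \<and> almost_period w (T (5 * e)) e q \<and> almost_period w (T (5 * e)) e q'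
       \<and> \<tau> = p - p' \<and> \<bar>\<tau> - (q - q')\<bar> < e"
    by blast
  have "almost_period z (strip a0 b0) \<epsilon> \<tau> \<and> almost_period w (strip a0 b0) \<epsilon> \<tau>" if "\<tau> \<in> E" for \<tau>
  proof -
    obtain p p' q q' where pq: "almost_period z (T (5 * e)) e p" "almost_period z (T (5 * e)) e p'"
      "almost_period w (T (5 * e)) e q" "almost_period w (T (5 * e)) e q'"
      and \<tau>: "\<tau> = p - p'" "\<bar>\<tau> - (q - q')\<bar> < e"
      using E[OF \<open>\<tau> \<in> E\<close>] by blast
    have "almost_period z (T 0) (2 * e) \<tau>"
      using almost_period_diff_widened_strip[OF pq(1,2)[unfolded T_def] e, of 0] \<tau>(1) e
      unfolding T_def by simp
    moreover have "almost_period w (T (3 * e)) (2 * e) (q - q')"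
      using almost_period_diff_widened_strip[OF pq(3,4)[unfolded T_def] e, of "3 * e"]
      unfolding T_def by simp
    then have "almost_period w (T 0) (2 * e + e) \<tau>"
      using almost_period_perturb_widened_strip[of w a0 "3 * e" b0 "2 * e" "q - q'" \<tau> e 0] \<tau>(2) e
      unfolding T_def by simp
    ultimately show ?thesis
      using almost_period_mono[of z "T 0" "2 * e" \<tau> "strip a0 b0" \<epsilon>]
        almost_period_mono[of w "T 0" "2 * e + e" \<tau> "strip a0 b0" \<epsilon>] T0 e
      unfolding e_def by simp
  qed
  then show ?thesis using \<open>rel_dense E\<close> almost_period_imp_bij_bounds by meson
qed

end
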